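(* Let $c$ be a non-negative integer, $r$ a positive integer, $G$ a multigraph, and $\mathcal{C}$ a cluster partition of $G$ of capacity at most $r$ such that $\delta(G/\mathcal{C})\ge 8c$. Define $w:V(G)\to\mathbb{R}_{\ge 0}$ by $w(v)=|\mathrm{ext}(C)|/|C|$ for $v\in C\in\mathcal{C}$. Then for every $c$-bond cover $X$ of $G$, \[\frac{1}{2r}\,|E(G/\mathcal{C})|\;\le\;\sum_{v\in X}w(v)\;\le\;2\,|E(G/\mathcal{C})|.\]
   Context: Graphs are finite multigraphs without loops; when contracting edges, multiplicities of parallel edges created are summed and loops are deleted; edge counts are with multiplicity. The edge-degree of a vertex is the number of incident edges; $\delta(H)$ is the minimum edge-degree of $H$. A cluster partition of $G$ is a collection $\mathcal{C}$ of pairwise disjoint nonempty vertex sets, each inducing a connected subgraph of $G$, whose union is $V(G)$; its capacity is the maximum size of a set in $\mathcal{C}$. $G/\mathcal{C}$ is the multigraph obtained from $G$ by contracting all edges inside each cluster. For $C\in\mathcal{C}$, $\mathrm{ext}(C)$ is the set of edges with exactly one endpoint in $C$. $\theta_c$ is the graph on two vertices joined by $c$ parallel edges; $X\subseteq V(G)$ is a $c$-bond cover of $G$ if $G-X$ has no $\theta_c$ minor. *)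

theory Defs
  imports Complex_Main "HOL-Library.Disjoint_Sets"
begin

text \<open>A finite loopless multigraph: vertex set, set of edge identifiers, and for each
edge its set of two (distinct) endpoints. Parallel edges are distinct identifiers.\<close>

type_synonym ('a, 'e) mgraph = "'a set \<times> 'e set \<times> ('e \<Rightarrow> 'a set)"

definition verts :: "('a, 'e) mgraph \<Rightarrow> 'a set" where "verts G = fst G"
definition edges :: "('a, 'e) mgraph \<Rightarrow> 'e set" where "edges G = fst (snd G)"
definition ends :: "('a, 'e) mgraph \<Rightarrow> 'e \<Rightarrow> 'a set" where "ends G = snd (snd G)"

definition multigraph :: "('a, 'e) mgraph \<Rightarrow> bool" where
  "multigraph G \<longleftrightarrow> finite (verts G) \<and> finite (edges G) \<and>
     (\<forall>e\<in>edges G. ends G e \<subseteq> verts G \<and> card (ends G e) = 2)"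

definition edge_degree :: "('a, 'e) mgraph \<Rightarrow> 'a \<Rightarrow> nat" where
  "edge_degree G v = card {e \<in> edges G. v \<in> ends G e}"

definition min_degree :: "('a, 'e) mgraph \<Rightarrow> nat" where
  "min_degree G = Min (edge_degree G ` verts G)"

definition adj_in :: "('a, 'e) mgraph \<Rightarrow> 'a set \<Rightarrow> ('a \<times> 'a) set" where
  "adj_in G S = {(u, v). u \<in> S \<and> v \<in> S \<and> (\<exists>e\<in>edges G. ends G e = {u, v})}"

definition connected_set :: "('a, 'e) mgraph \<Rightarrow> 'a set \<Rightarrow> bool" where
  "connected_set G S \<longleftrightarrow> S \<noteq> {} \<and> S \<subseteq> verts G \<and>
     (\<forall>u\<in>S. \<forall>v\<in>S. (u, v) \<in> (adj_in G S)\<^sup>*)"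

definition cluster_partition :: "('a, 'e) mgraph \<Rightarrow> 'a set set \<Rightarrow> bool" where
  "cluster_partition G \<C> \<longleftrightarrow> (\<forall>C\<in>\<C>. connected_set G C) \<and> disjoint \<C> \<and> \<Union>\<C> = verts G"

definition capacity :: "'a set set \<Rightarrow> nat" where
  "capacity \<C> = Max (card ` \<C>)"

text \<open>G/\<C>: vertices are the clusters; edges with both ends in one cluster become loops
and are deleted; all other edges are kept (so parallel edges add up).\<close>
definition contract :: "('a, 'e) mgraph \<Rightarrow> 'a set set \<Rightarrow> ('a set, 'e) mgraph" where
  "contract G \<C> = (\<C>, {e \<in> edges G. \<forall>C\<in>\<C>. \<not> ends G e \<subseteq> C},
                   \<lambda>e. {C \<in> \<C>. ends G e \<inter> C \<noteq> {}})"

definition ext :: "('a, 'e) mgraph \<Rightarrow> 'a set \<Rightarrow> 'e set" where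
  "ext G C = {e \<in> edges G. card (ends G e \<inter> C) = 1}"

definition cluster_of :: "'a set set \<Rightarrow> 'a \<Rightarrow> 'a set" where
  "cluster_of \<C> v = (THE C. C \<in> \<C> \<and> v \<in> C)"

definition cluster_weight :: "('a, 'e) mgraph \<Rightarrow> 'a set set \<Rightarrow> 'a \<Rightarrow> real" where
  "cluster_weight G \<C> v = real (card (ext G (cluster_of \<C> v))) / real (card (cluster_of \<C> v))"

definition delete_verts :: "('a, 'e) mgraph \<Rightarrow> 'a set \<Rightarrow> ('a, 'e) mgraph" where
  "delete_verts G X = (verts G - X, {e \<in> edges G. ends G e \<inter> X = {}}, ends G)"

text \<open>H is a minor of G, via a minor model: pairwise disjoint connected branch sets,
and an injective assignment of G-edges to H-edges joining the corresponding branch sets.\<close>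
definition has_minor :: "('a, 'e) mgraph \<Rightarrow> ('b, 'f) mgraph \<Rightarrow> bool" where
  "has_minor G H \<longleftrightarrow> (\<exists>(branch :: 'b \<Rightarrow> 'a set) (emap :: 'f \<Rightarrow> 'e).
     (\<forall>x\<in>verts H. connected_set G (branch x)) \<and>
     (\<forall>x\<in>verts H. \<forall>y\<in>verts H. x \<noteq> y \<longrightarrow> branch x \<inter> branch y = {}) \<and>
     inj_on emap (edges H) \<and>
     (\<forall>f\<in>edges H. emap f \<in> edges G \<and>
        (\<forall>x\<in>ends H f. ends G (emap f) \<inter> branch x \<noteq> {})))"

definition theta :: "nat \<Rightarrow> (nat, nat) mgraph" where
  "theta c = ({0, 1}, {..<c}, \<lambda>_. {0, 1})"

definition bond_cover :: "nat \<Rightarrow> ('a, 'e) mgraph \<Rightarrow> 'a set \<Rightarrow> bool" where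
  "bond_cover c G X \<longleftrightarrow> X \<subseteq> verts G \<and> \<not> has_minor (delete_verts G X) (theta c)"

end

theory Submission
  imports Defs
begin

text \<open>
  Grouping the vertices of X by cluster, the weight of X is
  \<open>\<Sum>C. |X \<inter> C| |ext C| / |C|\<close>, and \<open>ext C\<close> is exactly the set of edges of
  \<open>G/\<C>\<close> at the vertex C. The upper bound is therefore the handshake lemma in \<open>G/\<C>\<close>.
  For the lower bound let U be the set of clusters avoiding X. An edge of \<open>G/\<C>\<close>
  with both ends in U is an edge of \<open>G - X\<close> between distinct clusters of U; since
  \<open>G - X\<close> has no \<open>\<theta>\<^sub>c\<close> minor, merging clusters along such edges one at a time
  absorbs fewer than c edges per merge, so there are at most \<open>(c - 1) |U|\<close> of them.
  As every cluster has degree at least 8c in \<open>G/\<C>\<close>, \<open>4c |U| \<le> |E(G/\<C>)|\<close>, so at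
  least half of the edges of \<open>G/\<C>\<close> lie in \<open>ext C\<close> for some cluster C meeting X,
  and each such cluster contributes at least \<open>|ext C| / r\<close>.
\<close>

lemma multigraph_edge_ends:
  assumes "multigraph G" "e \<in> edges G"
  obtains a b where "a \<noteq> b" "ends G e = {a, b}" "a \<in> verts G" "b \<in> verts G"
  using assms by (auto simp: multigraph_def card_2_iff)

lemma verts_delete_verts [simp]: "verts (delete_verts G X) = verts G - X"
  and edges_delete_verts [simp]: "edges (delete_verts G X) = {e \<in> edges G. ends G e \<inter> X = {}}"
  and ends_delete_verts [simp]: "ends (delete_verts G X) = ends G"
  by (simp_all add: delete_verts_def verts_def edges_def ends_def)

lemma multigraph_delete_verts: "multigraph G \<Longrightarrow> multigraph (delete_verts G X)"
  by (auto simp: multigraph_def)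

lemma connected_set_delete_verts:
  assumes "connected_set G A" "A \<inter> X = {}"
  shows "connected_set (delete_verts G X) A"
proof -
  have "adj_in (delete_verts G X) A = adj_in G A"
    using assms(2) unfolding adj_in_def by fastforce
  then show ?thesis
    using assms by (auto simp: connected_set_def)
qed

lemma connected_set_Un_edge:
  assumes A: "connected_set G A" and B: "connected_set G B"
    and e: "e \<in> edges G" "ends G e = {u, v}" and "u \<in> A" "v \<in> B"
  shows "connected_set G (A \<union> B)"
proof -
  let ?R = "(adj_in G (A \<union> B))\<^sup>*"
  have A_R: "(adj_in G A)\<^sup>* \<subseteq> ?R" and B_R: "(adj_in G B)\<^sup>* \<subseteq> ?R"
    by (auto intro!: rtrancl_mono simp: adj_in_def)
  have uv: "(u, v) \<in> ?R" "(v, u) \<in> ?R"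
    using assms by (auto simp: adj_in_def insert_commute intro!: r_into_rtrancl)
  have via_u: "(x, u) \<in> ?R \<and> (u, x) \<in> ?R" if "x \<in> A \<union> B" for x
  proof (cases "x \<in> A")
    case True
    then show ?thesis using A \<open>u \<in> A\<close> A_R by (auto simp: connected_set_def)
  next
    case False
    then have "(x, v) \<in> ?R" "(v, x) \<in> ?R"
      using that B \<open>v \<in> B\<close> B_R by (auto simp: connected_set_def)
    then show ?thesis using uv by (meson rtrancl_trans)
  qed
  have "(x, y) \<in> ?R" if "x \<in> A \<union> B" "y \<in> A \<union> B" for x y
    using via_u[OF that(1)] via_u[OF that(2)] by (meson rtrancl_trans)
  then show ?thesis
    using A B by (auto simp: connected_set_def)
qed

definition edges_between :: "('a, 'e) mgraph \<Rightarrow> 'a set \<Rightarrow> 'a set \<Rightarrow> 'e set" where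
  "edges_between G A B = {e \<in> edges G. ends G e \<inter> A \<noteq> {} \<and> ends G e \<inter> B \<noteq> {}}"

lemma has_minor_theta:
  assumes "connected_set G A" "connected_set G B" "A \<inter> B = {}" "finite (edges G)"
    and "c \<le> card (edges_between G A B)"
  shows "has_minor G (theta c)"
proof -
  have "finite (edges_between G A B)"
    using assms(4) by (simp add: edges_between_def)
  then obtain f where f: "f ` {..<c} \<subseteq> edges_between G A B" "inj_on f {..<c}"
    using card_le_inj[of "{..<c}" "edges_between G A B"] assms(5) by auto
  show ?thesis
    unfolding has_minor_def
    by (rule exI[of _ "\<lambda>x. if x = 0 then A else B"], rule exI[of _ f])
      (use f assms(1-3) in \<open>auto simp: theta_def verts_def edges_def ends_def edges_between_def\<close>)
qed

definition cross_edges :: "('a, 'e) mgraph \<Rightarrow> 'a set set \<Rightarrow> 'e set" where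
  "cross_edges G P = {e \<in> edges G. ends G e \<subseteq> \<Union>P \<and> (\<forall>A\<in>P. \<not> ends G e \<subseteq> A)}"

lemma cross_edge_ends:
  assumes "multigraph G" "e \<in> cross_edges G P"
  obtains A B a b where "A \<in> P" "B \<in> P" "a \<in> A" "b \<in> B" "b \<notin> A" "ends G e = {a, b}"
proof -
  obtain a b where ab: "ends G e = {a, b}" "a \<noteq> b"
    using assms by (auto simp: cross_edges_def elim: multigraph_edge_ends)
  then show ?thesis
    using that assms(2) by (auto simp: cross_edges_def)
qed

lemma cross_edges_merge:
  assumes "A \<in> P" "B \<in> P"
  shows "cross_edges G P \<subseteq> cross_edges G (insert (A \<union> B) (P - {A, B})) \<union> edges_between G A B"
  using assms by (auto simp: cross_edges_def edges_between_def)

lemma disjoint_merge: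
  "disjoint P \<Longrightarrow> A \<in> P \<Longrightarrow> B \<in> P \<Longrightarrow> disjoint (insert (A \<union> B) (P - {A, B}))"
  unfolding pairwise_def disjnt_def by blast

lemma card_merge:
  assumes "finite P" "disjoint P" "A \<in> P" "B \<in> P" "A \<noteq> B" "A \<noteq> {}"
  shows "card (insert (A \<union> B) (P - {A, B})) = card P - 1"
proof -
  have "A \<union> B \<notin> P - {A, B}"
  proof
    assume "A \<union> B \<in> P - {A, B}"
    then have "disjnt A (A \<union> B)"
      using pairwiseD[OF assms(2,3)] by blast
    then show False using assms(6) by (auto simp: disjnt_def)
  qed
  moreover have "card {A, B} \<le> card P"
    using assms(1,3,4) by (intro card_mono) auto
  ultimately show ?thesis
    using assms by (simp add: card_Diff_subset)
qed

lemma card_cross_edges_le: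
  assumes G: "multigraph G" and no_theta: "\<not> has_minor G (theta c)"
    and "finite P" "\<forall>A\<in>P. connected_set G A" "disjoint P"
  shows "card (cross_edges G P) \<le> (c - 1) * card P"
  using assms(3-5)
proof (induction "card P" arbitrary: P rule: less_induct)
  case less
  show ?case
  proof (cases "cross_edges G P = {}")
    case True
    then show ?thesis by simp
  next
    case False
    then obtain e where e: "e \<in> cross_edges G P" by blast
    then have eG: "e \<in> edges G" by (simp add: cross_edges_def)
    obtain A B a b where A: "A \<in> P" "a \<in> A" "b \<notin> A" and B: "B \<in> P" "b \<in> B"
      and ab: "ends G e = {a, b}"
      using cross_edge_ends[OF G e] by metis
    have "A \<noteq> B" "A \<noteq> {}" using A B by auto
    then have AB: "A \<inter> B = {}"
      using pairwiseD[OF less.prems(3) A(1) B(1)] by (simp add: disjnt_def)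
    have fin: "finite (edges G)" using G by (simp add: multigraph_def)
    let ?Q = "insert (A \<union> B) (P - {A, B})"
    have card_Q: "card ?Q = card P - 1" and "card P \<noteq> 0"
      using card_merge[OF less.prems(1,3) A(1) B(1) \<open>A \<noteq> B\<close> \<open>A \<noteq> {}\<close>] A(1) less.prems(1)
      by auto
    have "connected_set G (A \<union> B)"
      using connected_set_Un_edge[OF _ _ eG ab(1) A(2) B(2)] A B less.prems(2) by blast
    then have IH: "card (cross_edges G ?Q) \<le> (c - 1) * card ?Q"
      using less.prems disjoint_merge[OF less.prems(3) A(1) B(1)] \<open>card P \<noteq> 0\<close> card_Q
      by (intro less.hyps) auto
    have "\<not> c \<le> card (edges_between G A B)"
      using has_minor_theta[OF _ _ AB fin, of c] no_theta A B less.prems(2) by blast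
    then have between: "card (edges_between G A B) \<le> c - 1"
      by simp
    have "card (cross_edges G P) \<le> card (cross_edges G ?Q \<union> edges_between G A B)"
      by (rule card_mono[OF _ cross_edges_merge[OF A(1) B(1)]])
        (simp add: fin cross_edges_def edges_between_def)
    also have "\<dots> \<le> (c - 1) * (card P - 1) + (c - 1)"
      using card_Un_le IH between card_Q by (metis add_mono order_trans)
    also have "\<dots> = (c - 1) * card P"
      using \<open>card P \<noteq> 0\<close> by (cases "card P") auto
    finally show ?thesis .
  qed
qed

lemma sum_edge_degree_le:
  assumes G: "multigraph G" and S: "S \<subseteq> verts G"
  shows "(\<Sum>v\<in>S. edge_degree G v) \<le> 2 * card (edges G)"
proof -
  have fin: "finite S" "finite (edges G)"
    using G S finite_subset by (auto simp: multigraph_def)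
  have "(\<Sum>v\<in>S. edge_degree G v) = (\<Sum>e\<in>edges G. card {v \<in> S. v \<in> ends G e})"
    unfolding edge_degree_def using fin by (rule sum_multicount_gen) simp
  also have "\<dots> \<le> (\<Sum>e\<in>edges G. card (ends G e))"
    using G by (intro sum_mono card_mono) (auto simp: multigraph_def intro: card_ge_0_finite)
  also have "\<dots> = 2 * card (edges G)"
    using G by (simp add: multigraph_def)
  finally show ?thesis .
qed

lemma min_degree_mult_card_le:
  assumes G: "multigraph G" and S: "S \<subseteq> verts G"
  shows "min_degree G * card S \<le> 2 * card (edges G)"
proof -
  have "min_degree G \<le> edge_degree G v" if "v \<in> S" for v
    using G S that by (auto simp: min_degree_def multigraph_def)
  then have "(\<Sum>v\<in>S. min_degree G) \<le> (\<Sum>v\<in>S. edge_degree G v)"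
    by (rule sum_mono)
  then show ?thesis
    using sum_edge_degree_le[OF G S] by (simp add: mult.commute)
qed

lemma verts_contract [simp]: "verts (contract G \<C>) = \<C>"
  and edges_contract [simp]: "edges (contract G \<C>) = {e \<in> edges G. \<forall>C\<in>\<C>. \<not> ends G e \<subseteq> C}"
  and ends_contract [simp]: "ends (contract G \<C>) e = {C \<in> \<C>. ends G e \<inter> C \<noteq> {}}"
  by (simp_all add: contract_def verts_def edges_def ends_def)

lemma finite_cluster_partition:
  assumes "multigraph G" "cluster_partition G \<C>"
  shows "finite \<C>" "C \<in> \<C> \<Longrightarrow> finite C"
  using assms unfolding multigraph_def cluster_partition_def
  by (metis finite_UnionD, metis Union_upper finite_subset)

lemma cluster_partition_unique:
  "cluster_partition G \<C> \<Longrightarrow> C \<in> \<C> \<Longrightarrow> C' \<in> \<C> \<Longrightarrow> v \<in> C \<Longrightarrow> v \<in> C' \<Longrightarrow> C' = C"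
  by (auto simp: cluster_partition_def dest: disjointD)

lemma cluster_of_eq:
  assumes P: "cluster_partition G \<C>" and "C \<in> \<C>" "v \<in> C"
  shows "cluster_of \<C> v = C"
  unfolding cluster_of_def
proof (rule the_equality)
  show "C \<in> \<C> \<and> v \<in> C" using assms by blast
  show "C' = C" if "C' \<in> \<C> \<and> v \<in> C'" for C'
    using that cluster_partition_unique[OF P assms(2)] assms(3) by blast
qed

lemma multigraph_contract:
  assumes G: "multigraph G" and P: "cluster_partition G \<C>"
  shows "multigraph (contract G \<C>)"
proof -
  have card_ends: "card {C \<in> \<C>. ends G e \<inter> C \<noteq> {}} = 2" if e: "e \<in> edges (contract G \<C>)" for e
  proof -
    obtain a b where ab: "a \<noteq> b" "ends G e = {a, b}" "a \<in> verts G" "b \<in> verts G"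
      using G e by (auto elim: multigraph_edge_ends)
    then obtain A B where A: "A \<in> \<C>" "a \<in> A" and B: "B \<in> \<C>" "b \<in> B"
      using P unfolding cluster_partition_def by blast
    have "A \<noteq> B" using e ab A B by auto
    moreover have "C = A \<or> C = B" if "C \<in> \<C>" "ends G e \<inter> C \<noteq> {}" for C
      using that ab(2) cluster_partition_unique[OF P A(1) that(1) A(2)]
        cluster_partition_unique[OF P B(1) that(1) B(2)] by auto
    then have "{C \<in> \<C>. ends G e \<inter> C \<noteq> {}} = {A, B}"
      using A B ab(2) by auto
    ultimately show ?thesis by simp
  qed
  show ?thesis
    using G card_ends finite_cluster_partition(1)[OF G P] by (auto simp: multigraph_def)
qed

lemma ext_iff_incident_contract_edge:
  assumes G: "multigraph G" and P: "cluster_partition G \<C>" and C: "C \<in> \<C>"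
  shows "e \<in> ext G C \<longleftrightarrow> e \<in> edges (contract G \<C>) \<and> ends G e \<inter> C \<noteq> {}"
proof (cases "e \<in> edges G")
  case True
  then obtain a b where ab: "a \<noteq> b" "ends G e = {a, b}"
    using G by (auto elim: multigraph_edge_ends)
  have "e \<in> edges (contract G \<C>) \<longleftrightarrow> \<not> ends G e \<subseteq> C" if "ends G e \<inter> C \<noteq> {}"
  proof -
    have "C' = C" if "C' \<in> \<C>" "ends G e \<subseteq> C'" for C'
      using \<open>ends G e \<inter> C \<noteq> {}\<close> cluster_partition_unique[OF P C that(1)] that(2) by blast
    then show ?thesis using True C by auto
  qed
  moreover have "card (ends G e \<inter> C) = 1 \<longleftrightarrow> ends G e \<inter> C \<noteq> {} \<and> \<not> ends G e \<subseteq> C"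
    using ab by (cases "a \<in> C"; cases "b \<in> C") auto
  ultimately show ?thesis
    using True by (auto simp: ext_def)
qed (simp add: ext_def)

lemma edge_degree_contract:
  assumes "multigraph G" "cluster_partition G \<C>" "C \<in> \<C>"
  shows "edge_degree (contract G \<C>) C = card (ext G C)"
proof -
  have "{e \<in> edges (contract G \<C>). C \<in> ends (contract G \<C>) e} = ext G C"
    using ext_iff_incident_contract_edge[OF assms] assms(3) by auto
  then show ?thesis by (simp add: edge_degree_def)
qed

lemma sum_cluster_weight:
  assumes G: "multigraph G" and P: "cluster_partition G \<C>" and X: "X \<subseteq> verts G"
  shows "(\<Sum>v\<in>X. cluster_weight G \<C> v)
           = (\<Sum>C\<in>\<C>. real (card (X \<inter> C)) * real (card (ext G C)) / real (card C))"
proof -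
  have disj: "disjoint \<C>" and X_eq: "X = (\<Union>C\<in>\<C>. X \<inter> C)"
    using P X by (auto simp: cluster_partition_def)
  have "(\<Sum>v\<in>X. cluster_weight G \<C> v) = (\<Sum>C\<in>\<C>. \<Sum>v\<in>X \<inter> C. cluster_weight G \<C> v)"
    by (subst X_eq, rule sum.UNION_disjoint)
      (use finite_cluster_partition[OF G P] disj in \<open>auto dest: disjointD\<close>)
  also have "\<dots> = (\<Sum>C\<in>\<C>. \<Sum>v\<in>X \<inter> C. real (card (ext G C)) / real (card C))"
    using P by (intro sum.cong refl) (simp add: cluster_weight_def cluster_of_eq)
  finally show ?thesis by simp
qed

lemma sum_cluster_weight_le:
  assumes G: "multigraph G" and P: "cluster_partition G \<C>" and X: "X \<subseteq> verts G"
  shows "(\<Sum>v\<in>X. cluster_weight G \<C> v) \<le> 2 * real (card (edges (contract G \<C>)))"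
proof -
  have "real (card (X \<inter> C)) * real (card (ext G C)) / real (card C) \<le> real (card (ext G C))"
    if C: "C \<in> \<C>" for C
  proof -
    have "card (X \<inter> C) \<le> card C" "card C > 0"
      using finite_cluster_partition(2)[OF G P C] P C
      by (auto intro: card_mono simp: card_gt_0_iff cluster_partition_def connected_set_def)
    then show ?thesis
      by (simp add: divide_le_eq mult_right_mono mult.commute)
  qed
  then have "(\<Sum>v\<in>X. cluster_weight G \<C> v) \<le> (\<Sum>C\<in>\<C>. real (edge_degree (contract G \<C>) C))"
    unfolding sum_cluster_weight[OF G P X] by (intro sum_mono) (simp add: edge_degree_contract[OF G P])
  also have "\<dots> \<le> 2 * real (card (edges (contract G \<C>)))"
    using sum_edge_degree_le[OF multigraph_contract[OF G P], of \<C>] by (simp flip: of_nat_sum)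
  finally show ?thesis .
qed

definition hit_clusters :: "'a set set \<Rightarrow> 'a set \<Rightarrow> 'a set set" where
  "hit_clusters \<C> X = {C \<in> \<C>. C \<inter> X \<noteq> {}}"

lemma sum_ext_hit_clusters_le_sum_cluster_weight:
  assumes G: "multigraph G" and P: "cluster_partition G \<C>" and X: "X \<subseteq> verts G"
    and "r > 0" "capacity \<C> \<le> r"
  shows "real (\<Sum>C\<in>hit_clusters \<C> X. card (ext G C)) / real r \<le> (\<Sum>v\<in>X. cluster_weight G \<C> v)"
proof -
  let ?t = "\<lambda>C. real (card (X \<inter> C)) * real (card (ext G C)) / real (card C)"
  have "real (card (ext G C)) / real r \<le> ?t C" if C: "C \<in> hit_clusters \<C> X" for C
  proof -
    have C\<C>: "C \<in> \<C>" and fin: "finite C" and "C \<inter> X \<noteq> {}"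
      using C finite_cluster_partition(2)[OF G P] by (auto simp: hit_clusters_def)
    then have "1 \<le> card (X \<inter> C)"
      by (simp add: Suc_le_eq card_gt_0_iff Int_commute)
    have "card C \<le> capacity \<C>"
      unfolding capacity_def using C\<C> finite_cluster_partition(1)[OF G P] by simp
    then have "card C \<le> r" "card C > 0"
      using assms(5) fin \<open>C \<inter> X \<noteq> {}\<close> by (auto simp: card_gt_0_iff)
    then have "real (card (ext G C)) / real r \<le> real (card (ext G C)) / real (card C)"
      by (intro divide_left_mono) auto
    also have "\<dots> \<le> ?t C"
      using \<open>1 \<le> card (X \<inter> C)\<close> by (intro divide_right_mono) (auto simp: mult_le_cancel_right1)
    finally show ?thesis .
  qed
  then have "(\<Sum>C\<in>hit_clusters \<C> X. real (card (ext G C)) / real r) \<le> (\<Sum>C\<in>hit_clusters \<C> X. ?t C)"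
    by (rule sum_mono)
  also have "\<dots> \<le> (\<Sum>C\<in>\<C>. ?t C)"
    using finite_cluster_partition(1)[OF G P] by (intro sum_mono2) (auto simp: hit_clusters_def)
  finally show ?thesis
    by (simp add: sum_cluster_weight[OF G P X] sum_divide_distrib)
qed

lemma edges_contract_subset:
  assumes G: "multigraph G" and P: "cluster_partition G \<C>"
  shows "edges (contract G \<C>)
           \<subseteq> cross_edges (delete_verts G X) (\<C> - hit_clusters \<C> X) \<union> (\<Union>C\<in>hit_clusters \<C> X. ext G C)"
    (is "_ \<subseteq> cross_edges _ ?U \<union> _")
proof
  fix e assume e: "e \<in> edges (contract G \<C>)"
  show "e \<in> cross_edges (delete_verts G X) ?U \<union> (\<Union>C\<in>hit_clusters \<C> X. ext G C)"
  proof (cases "ends G e \<subseteq> \<Union>?U")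
    case True
    then have "ends G e \<inter> X = {}" by (auto simp: hit_clusters_def)
    with True e show ?thesis by (auto simp: cross_edges_def)
  next
    case False
    then obtain a where a: "a \<in> ends G e" "a \<notin> \<Union>?U" by blast
    moreover have "ends G e \<subseteq> \<Union>\<C>"
      using G P e by (auto simp: multigraph_def cluster_partition_def)
    ultimately obtain C where "C \<in> hit_clusters \<C> X" "ends G e \<inter> C \<noteq> {}"
      by blast
    moreover have "e \<in> ext G C"
      using ext_iff_incident_contract_edge[OF G P] calculation e by (auto simp: hit_clusters_def)
    ultimately show ?thesis by blast
  qed
qed

lemma card_edges_contract_le:
  assumes G: "multigraph G" and P: "cluster_partition G \<C>"
    and deg: "min_degree (contract G \<C>) \<ge> 8 * c" and cover: "bond_cover c G X"
  shows "card (edges (contract G \<C>)) \<le> 2 * (\<Sum>C\<in>hit_clusters \<C> X. card (ext G C))"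
proof -
  define U where "U = \<C> - hit_clusters \<C> X"
  let ?E = "edges (contract G \<C>)" and ?S = "\<Sum>C\<in>hit_clusters \<C> X. card (ext G C)"
  have fin: "finite \<C>" "finite (edges G)"
    using G finite_cluster_partition(1)[OF G P] by (auto simp: multigraph_def)
  have "?E \<subseteq> cross_edges (delete_verts G X) U \<union> (\<Union>C\<in>hit_clusters \<C> X. ext G C)"
    unfolding U_def by (rule edges_contract_subset[OF G P])
  then have "card ?E \<le> card (cross_edges (delete_verts G X) U) + card (\<Union>C\<in>hit_clusters \<C> X. ext G C)"
    using fin finite_subset[of "\<Union>C\<in>hit_clusters \<C> X. ext G C" "edges G"]
    by (intro order_trans[OF card_mono card_Un_le]) (auto simp: cross_edges_def ext_def)
  also have "\<dots> \<le> (c - 1) * card U + ?S"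
  proof (intro add_mono card_UN_le)
    have "\<forall>A\<in>U. connected_set (delete_verts G X) A"
      using P by (auto simp: U_def hit_clusters_def cluster_partition_def intro: connected_set_delete_verts)
    moreover have "disjoint U"
      using P by (auto simp: U_def cluster_partition_def intro: pairwise_subset)
    ultimately show "card (cross_edges (delete_verts G X) U) \<le> (c - 1) * card U"
      using cover fin by (intro card_cross_edges_le multigraph_delete_verts G)
        (auto simp: bond_cover_def U_def)
  qed (use fin in \<open>simp add: hit_clusters_def\<close>)
  finally have E_le: "card ?E \<le> c * card U + ?S"
    by (meson add_le_mono diff_le_self mult_le_mono1 order_trans order_refl)
  have "8 * c * card U \<le> min_degree (contract G \<C>) * card U"
    using deg by (rule mult_le_mono1)
  also have "\<dots> \<le> 2 * card ?E"
    by (rule min_degree_mult_card_le[OF multigraph_contract[OF G P]]) (auto simp: U_def)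
  finally show ?thesis
    using E_le by linarith
qed

theorem lemma5:
  fixes c r :: nat and G :: "('a, 'e) mgraph" and \<C> :: "'a set set" and X :: "'a set"
  assumes "r > 0"
    and "multigraph G"
    and "cluster_partition G \<C>"
    and "capacity \<C> \<le> r"
    and "min_degree (contract G \<C>) \<ge> 8 * c"
    and "bond_cover c G X"
  shows "1 / (2 * real r) * real (card (edges (contract G \<C>)))
           \<le> (\<Sum>v\<in>X. cluster_weight G \<C> v)
      \<and> (\<Sum>v\<in>X. cluster_weight G \<C> v) \<le> 2 * real (card (edges (contract G \<C>)))"
proof
  have X: "X \<subseteq> verts G" using assms(6) by (simp add: bond_cover_def)
  let ?S = "\<Sum>C\<in>hit_clusters \<C> X. card (ext G C)"
  have "real (card (edges (contract G \<C>))) \<le> 2 * real ?S"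
    using card_edges_contract_le[OF assms(2,3,5,6)] by linarith
  then have "1 / (2 * real r) * real (card (edges (contract G \<C>))) \<le> real ?S / real r"
    using assms(1) by (simp add: field_simps)
  also have "\<dots> \<le> (\<Sum>v\<in>X. cluster_weight G \<C> v)"
    using sum_ext_hit_clusters_le_sum_cluster_weight[OF assms(2,3) X assms(1,4)] .
  finally show "1 / (2 * real r) * real (card (edges (contract G \<C>))) \<le> (\<Sum>v\<in>X. cluster_weight G \<C> v)" .
  show "(\<Sum>v\<in>X. cluster_weight G \<C> v) \<le> 2 * real (card (edges (contract G \<C>)))"
    using sum_cluster_weight_le[OF assms(2,3) X] .
qed

end
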